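(* For every regular command $\mathsf{r}$ and all $P,Q\subseteq\Sigma$, the SIL triple $\langle P\rangle\,\mathsf{r}\,\langle Q\rangle$ is derivable in the SIL proof system if and only if it is valid, i.e. if and only if $\overleftarrow{[\![\mathsf{r}]\!]}Q\supseteq P$.
   Context: $\mathrm{Var}$ is a finite set of variables and $\Sigma=\mathrm{Var}\to\mathbb{Z}$ is the set of states. Regular commands: atomic commands $\mathsf{c}::=\mathtt{skip}\mid x:=a\mid b?$ (integer arithmetic expression $a$, Boolean expression $b$, evaluated as usual) and $\mathsf{r}::=\mathsf{c}\mid \mathsf{r};\mathsf{r}\mid\mathsf{r}\boxplus\mathsf{r}\mid\mathsf{r}^*$. For $S\subseteq\Sigma$: $[\![\mathtt{skip}]\!]S=S$, $[\![x:=a]\!]S=\{\sigma[x\mapsto[\![a]\!]\sigma]\mid\sigma\in S\}$, $[\![b?]\!]S=\{\sigma\in S\mid[\![b]\!]\sigma=\mathrm{true}\}$. Forward collecting semantics: $\overrightarrow{[\![\mathsf{c}]\!]}S=[\![\mathsf{c}]\!]S$, $\overrightarrow{[\![\mathsf{r}_1;\mathsf{r}_2]\!]}S=\overrightarrow{[\![\mathsf{r}_2]\!]}(\overrightarrow{[\![\mathsf{r}_1]\!]}S)$, $\overrightarrow{[\![\mathsf{r}_1\boxplus\mathsf{r}_2]\!]}S=\overrightarrow{[\![\mathsf{r}_1]\!]}S\cup\overrightarrow{[\![\mathsf{r}_2]\!]}S$, $\overrightarrow{[\![\mathsf{r}^*]\!]}S=\bigcup_{n\ge0}\overrightarrow{[\![\mathsf{r}]\!]}^nS$.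 Backward semantics: $\overleftarrow{[\![\mathsf{r}]\!]}\sigma'=\{\sigma\mid\sigma'\in\overrightarrow{[\![\mathsf{r}]\!]}\{\sigma\}\}$, lifted to sets by union. The SIL proof system derives triples $\langle P\rangle\,\mathsf{r}\,\langle Q\rangle$ ($P,Q\subseteq\Sigma$) with exactly the following rules: (atom) $\langle\overleftarrow{[\![\mathsf{c}]\!]}Q\rangle\,\mathsf{c}\,\langle Q\rangle$ for every atomic $\mathsf{c}$ and $Q$; (cons) from $P\subseteq P'$, $\langle P'\rangle\,\mathsf{r}\,\langle Q'\rangle$, $Q'\subseteq Q$ derive $\langle P\rangle\,\mathsf{r}\,\langle Q\rangle$; (seq) from $\langle P\rangle\,\mathsf{r}_1\,\langle R\rangle$ and $\langle R\rangle\,\mathsf{r}_2\,\langle Q\rangle$ derive $\langle P\rangle\,\mathsf{r}_1;\mathsf{r}_2\,\langle Q\rangle$; (choice) from $\langle P_1\rangle\,\mathsf{r}_1\,\langle Q\rangle$ and $\langle P_2\rangle\,\mathsf{r}_2\,\langle Q\rangle$ derive $\langle P_1\cup P_2\rangle\,\mathsf{r}_1\boxplus\mathsf{r}_2\,\langle Q\rangle$; (iter) from $\langle Q_{n+1}\rangle\,\mathsf{r}\,\langle Q_n\rangle$ for all $n\ge0$ (infinitely many premises) derive $\langle\bigcup_{n\ge0}Q_n\rangle\,\mathsf{r}^*\,\langle Q_0\rangle$. Derivations may be infinitely branching but are well-founded. *)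

theory Defs
  imports Main
begin

(* Variables: a finite type 'v (Var is a finite set); states: 'v \<Rightarrow> int *)
type_synonym 'v state = "'v \<Rightarrow> int"

datatype 'v aexp = N int | V 'v | Plus "'v aexp" "'v aexp" | Minus "'v aexp" "'v aexp"
  | Times "'v aexp" "'v aexp" | Div "'v aexp" "'v aexp" | Mod "'v aexp" "'v aexp"

fun aval :: "'v aexp \<Rightarrow> 'v state \<Rightarrow> int" where
  "aval (N n) s = n"
| "aval (V x) s = s x"
| "aval (Plus a b) s = aval a s + aval b s"
| "aval (Minus a b) s = aval a s - aval b s"
| "aval (Times a b) s = aval a s * aval b s"
| "aval (Div a b) s = aval a s div aval b s"
| "aval (Mod a b) s = aval a s mod aval b s"

datatype 'v bexp = Bc bool | Not "'v bexp" | And "'v bexp" "'v bexp" | Or "'v bexp" "'v bexp"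
  | Less "'v aexp" "'v aexp" | Leq "'v aexp" "'v aexp" | Eq "'v aexp" "'v aexp"

fun bval :: "'v bexp \<Rightarrow> 'v state \<Rightarrow> bool" where
  "bval (Bc v) s = v"
| "bval (Not b) s = (\<not> bval b s)"
| "bval (And b c) s = (bval b s \<and> bval c s)"
| "bval (Or b c) s = (bval b s \<or> bval c s)"
| "bval (Less a b) s = (aval a s < aval b s)"
| "bval (Leq a b) s = (aval a s \<le> aval b s)"
| "bval (Eq a b) s = (aval a s = aval b s)"

datatype 'v atom = Skip | Assign 'v "'v aexp" | Assume "'v bexp"

datatype 'v rcmd = Atom "'v atom" | Seq "'v rcmd" "'v rcmd" | Choice "'v rcmd" "'v rcmd"
  | Star "'v rcmd"

fun asem :: "'v atom \<Rightarrow> 'v state set \<Rightarrow> 'v state set" where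
  "asem Skip S = S"
| "asem (Assign x a) S = {\<sigma>(x := aval a \<sigma>) | \<sigma>. \<sigma> \<in> S}"
| "asem (Assume b) S = {\<sigma> \<in> S. bval b \<sigma>}"

fun fwd :: "'v rcmd \<Rightarrow> 'v state set \<Rightarrow> 'v state set" where
  "fwd (Atom c) S = asem c S"
| "fwd (Seq r1 r2) S = fwd r2 (fwd r1 S)"
| "fwd (Choice r1 r2) S = fwd r1 S \<union> fwd r2 S"
| "fwd (Star r) S = (\<Union>n. (fwd r ^^ n) S)"

definition bwd_atom :: "'v atom \<Rightarrow> 'v state set \<Rightarrow> 'v state set" where
  "bwd_atom c Q = {\<sigma>. \<exists>\<sigma>'\<in>Q. \<sigma>' \<in> asem c {\<sigma>}}"

definition bwd :: "'v rcmd \<Rightarrow> 'v state set \<Rightarrow> 'v state set" where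
  "bwd r Q = {\<sigma>. \<exists>\<sigma>'\<in>Q. \<sigma>' \<in> fwd r {\<sigma>}}"

inductive sil :: "'v state set \<Rightarrow> 'v rcmd \<Rightarrow> 'v state set \<Rightarrow> bool" where
  atom: "sil (bwd_atom c Q) (Atom c) Q"
| cons: "P \<subseteq> P' \<Longrightarrow> sil P' r Q' \<Longrightarrow> Q' \<subseteq> Q \<Longrightarrow> sil P r Q"
| seq: "sil P r1 R \<Longrightarrow> sil R r2 Q \<Longrightarrow> sil P (Seq r1 r2) Q"
| choice: "sil P1 r1 Q \<Longrightarrow> sil P2 r2 Q \<Longrightarrow> sil (P1 \<union> P2) (Choice r1 r2) Q"
| iter: "(\<And>n. sil (Qs (Suc n)) r (Qs n)) \<Longrightarrow> sil (\<Union>n. Qs n) (Star r) (Qs 0)"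

end

theory Submission
  imports Defs
begin

text \<open>The forward semantics of every regular command is additive, i.e. determined by its
  action on singletons. Consequently the backward semantics is compositional:
  it maps sequencing to composition, choice to union and iteration to the union of the
  iterates of the body. Along these equations a derivation of
  \<open>\<langle>bwd r Q\<rangle> r \<langle>Q\<rangle>\<close> is built by induction on \<open>r\<close>, with the iterates
  \<open>Q\<^sub>n = bwd r\<^sup>n Q\<close> as premises of the iteration rule, and soundness of every rule follows from
  monotonicity of \<open>bwd r\<close>.\<close>

definition additive :: "('a set \<Rightarrow> 'b set) \<Rightarrow> bool" where
  "additive f \<longleftrightarrow> (\<forall>S. f S = (\<Union>\<sigma>\<in>S. f {\<sigma>}))"

definition backward :: "('a set \<Rightarrow> 'b set) \<Rightarrow> 'b set \<Rightarrow> 'a set" where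
  "backward f Q = {\<sigma>. \<exists>\<sigma>'\<in>Q. \<sigma>' \<in> f {\<sigma>}}"

lemma additiveI: "(\<And>S. f S = (\<Union>\<sigma>\<in>S. f {\<sigma>})) \<Longrightarrow> additive f"
  unfolding additive_def by (rule allI)

lemma additiveD: "additive f \<Longrightarrow> f S = (\<Union>\<sigma>\<in>S. f {\<sigma>})"
  unfolding additive_def by (erule spec)

lemma additive_id: "additive id"
  by (auto simp: additive_def)

lemma additive_comp:
  assumes f: "additive f" and g: "additive g"
  shows "additive (g \<circ> f)"
proof (rule additiveI)
  fix S
  have "g (f S) = (\<Union>\<tau>\<in>(\<Union>\<sigma>\<in>S. f {\<sigma>}). g {\<tau>})"
    using additiveD[OF f, of S] additiveD[OF g, of "f S"] by simp
  also have "\<dots> = (\<Union>\<sigma>\<in>S. g (f {\<sigma>}))"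
    using additiveD[OF g, of "f {_}"] by auto
  finally show "(g \<circ> f) S = (\<Union>\<sigma>\<in>S. (g \<circ> f) {\<sigma>})" by simp
qed

lemma additive_funpow:
  fixes f :: "'a set \<Rightarrow> 'a set"
  assumes "additive f"
  shows "additive (f ^^ n)"
proof (induction n)
  case 0
  show ?case unfolding funpow.simps(1) by (rule additive_id)
next
  case (Suc n)
  show ?case
    unfolding funpow_Suc_right using assms Suc.IH by (rule additive_comp)
qed

lemma backward_mono: "Q \<subseteq> Q' \<Longrightarrow> backward f Q \<subseteq> backward f Q'"
  by (auto simp: backward_def)

lemma backward_comp:
  assumes "additive g"
  shows "backward (g \<circ> f) Q = backward f (backward g Q)"
  using additiveD[OF assms, of "f {_}"] by (auto simp: backward_def)

lemma backward_funpow: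
  fixes f :: "'a set \<Rightarrow> 'a set"
  assumes "additive f"
  shows "backward (f ^^ n) Q = (backward f ^^ n) Q"
proof (induction n)
  case 0
  show ?case by (auto simp: backward_def)
next
  case (Suc n)
  have "backward (f ^^ Suc n) Q = backward (f ^^ n \<circ> f) Q"
    by (simp only: funpow_Suc_right)
  also have "\<dots> = backward f (backward (f ^^ n) Q)"
    using additive_funpow[OF assms] by (rule backward_comp)
  also have "\<dots> = backward f ((backward f ^^ n) Q)"
    by (simp only: Suc.IH)
  also have "\<dots> = (backward f ^^ Suc n) Q"
    by simp
  finally show ?case .
qed

lemma additive_asem: "additive (asem c)"
  by (rule additiveI) (cases c; auto)

lemma additive_fwd: "additive (fwd r)"
proof (induction r)
  case (Atom c)
  show ?case by (simp add: additive_asem)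
next
  case (Seq r1 r2)
  have "fwd (Seq r1 r2) = fwd r2 \<circ> fwd r1" by auto
  then show ?case using additive_comp[OF Seq.IH] by (simp only:)
next
  case (Choice r1 r2)
  show ?case
  proof (rule additiveI)
    fix S
    have "fwd (Choice r1 r2) S = (\<Union>\<sigma>\<in>S. fwd r1 {\<sigma>}) \<union> (\<Union>\<sigma>\<in>S. fwd r2 {\<sigma>})"
      using additiveD[OF Choice.IH(1), of S] additiveD[OF Choice.IH(2), of S] by simp
    then show "fwd (Choice r1 r2) S = (\<Union>\<sigma>\<in>S. fwd (Choice r1 r2) {\<sigma>})" by auto
  qed
next
  case (Star r)
  show ?case
  proof (rule additiveI)
    fix S
    have "(fwd r ^^ n) S = (\<Union>\<sigma>\<in>S. (fwd r ^^ n) {\<sigma>})" for n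
      using additive_funpow[OF Star.IH] by (rule additiveD)
    then show "fwd (Star r) S = (\<Union>\<sigma>\<in>S. fwd (Star r) {\<sigma>})" by auto
  qed
qed

lemma bwd_eq_backward: "bwd r = backward (fwd r)"
  by (auto simp: bwd_def backward_def)

lemma bwd_mono: "Q \<subseteq> Q' \<Longrightarrow> bwd r Q \<subseteq> bwd r Q'"
  by (simp add: bwd_eq_backward backward_mono)

lemma bwd_Atom: "bwd (Atom c) Q = bwd_atom c Q"
  by (simp add: bwd_def bwd_atom_def)

lemma bwd_Seq: "bwd (Seq r1 r2) Q = bwd r1 (bwd r2 Q)"
proof -
  have "fwd (Seq r1 r2) = fwd r2 \<circ> fwd r1" by auto
  then show ?thesis by (simp add: bwd_eq_backward backward_comp additive_fwd)
qed

lemma bwd_Choice: "bwd (Choice r1 r2) Q = bwd r1 Q \<union> bwd r2 Q"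
  by (auto simp: bwd_def)

lemma bwd_Star: "bwd (Star r) Q = (\<Union>n. (bwd r ^^ n) Q)"
proof -
  have "bwd (Star r) Q = (\<Union>n. backward (fwd r ^^ n) Q)"
    by (auto simp: bwd_def backward_def)
  then show ?thesis by (simp add: bwd_eq_backward backward_funpow additive_fwd)
qed

lemma sil_sound: "sil P r Q \<Longrightarrow> P \<subseteq> bwd r Q"
proof (induction rule: sil.induct)
  case (atom c Q)
  show ?case by (simp add: bwd_Atom)
next
  case (cons P P' r Q' Q)
  then show ?case using bwd_mono[of Q' Q r] by blast
next
  case (seq P r1 R r2 Q)
  then show ?case using bwd_mono[of R "bwd r2 Q" r1] by (simp add: bwd_Seq)
next
  case (choice P1 r1 Q P2 r2)
  then show ?case by (auto simp: bwd_Choice)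
next
  case (iter Qs r)
  have "Qs n \<subseteq> (bwd r ^^ n) (Qs 0)" for n
  proof (induction n)
    case (Suc n)
    then show ?case using iter.IH[of n] bwd_mono[of "Qs n" _ r] by auto
  qed simp
  then show ?case by (auto simp: bwd_Star)
qed

lemma sil_bwd: "sil (bwd r Q) r Q"
proof (induction r arbitrary: Q)
  case (Atom c)
  show ?case unfolding bwd_Atom by (rule sil.atom)
next
  case (Seq r1 r2)
  show ?case unfolding bwd_Seq using Seq.IH by (rule sil.seq)
next
  case (Choice r1 r2)
  show ?case unfolding bwd_Choice using Choice.IH by (rule sil.choice)
next
  case (Star r)
  have "sil ((bwd r ^^ Suc n) Q) r ((bwd r ^^ n) Q)" for n
    using Star.IH by simp
  then have "sil (\<Union>n. (bwd r ^^ n) Q) (Star r) ((bwd r ^^ 0) Q)"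
    by (rule sil.iter)
  then show ?case by (simp add: bwd_Star)
qed

theorem mainTheorem3:
  fixes r :: "('v::finite) rcmd" and P Q :: "'v state set"
  shows "sil P r Q \<longleftrightarrow> P \<subseteq> bwd r Q"
proof
  assume "sil P r Q"
  then show "P \<subseteq> bwd r Q" by (rule sil_sound)
next
  assume "P \<subseteq> bwd r Q"
  then show "sil P r Q" by (rule sil.cons[OF _ sil_bwd order_refl])
qed

end
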